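(* Fix $M\in\mathbb{R}$. For all $m\le M$, all probability distributions $\nu\in\mathcal{D}_{m,M}$ and all $\mu>\mathbb{E}(\nu)$, \[ \mathcal{K}_{\inf}(\nu,\mu,\mathcal{D}_{m,M})=\mathcal{K}_{\inf}(\nu,\mu,\mathcal{D}_{-\infty,M}). \]
   Context: $\mathcal{D}_{m,M}$ is the set of probability distributions on $\mathbb{R}$ supported on $[m,M]$; $\mathcal{D}_{-\infty,M}$ is the set of probability distributions with a first moment supported on $(-\infty,M]$. $\mathbb{E}(\nu)$ denotes the mean of $\nu$. For a distribution $\nu$, $x\in\mathbb{R}$ and a set of distributions $\mathcal{D}$, $\mathcal{K}_{\inf}(\nu,x,\mathcal{D})=\inf\{\mathrm{KL}(\nu,\nu'):\nu'\in\mathcal{D},\ \mathbb{E}(\nu')>x\}$, with the infimum of the empty set equal to $+\infty$; $\mathrm{KL}(\nu,\nu')=\int\ln(d\nu/d\nu')\,d\nu$ if $\nu\ll\nu'$ and $+\infty$ otherwise. *)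

theory Defs
  imports "HOL-Probability.Probability"
begin

definition real_distr :: "real measure \<Rightarrow> bool" where
  "real_distr \<nu> \<longleftrightarrow> prob_space \<nu> \<and> sets \<nu> = sets borel"

definition D_bdd :: "real \<Rightarrow> real \<Rightarrow> real measure set" where
  "D_bdd m M = {\<nu>. real_distr \<nu> \<and> emeasure \<nu> {m..M} = 1}"

definition D_upper :: "real \<Rightarrow> real measure set" where
  "D_upper M = {\<nu>. real_distr \<nu> \<and> integrable \<nu> (\<lambda>x. x) \<and> emeasure \<nu> {..M} = 1}"

definition mean :: "real measure \<Rightarrow> real" where
  "mean \<nu> = integral\<^sup>L \<nu> (\<lambda>x. x)"

text \<open>KL(nu, nu') = integral of ln(d nu / d nu') d nu if nu << nu', +infinity otherwise.
  The integral is taken in the extended sense: positive part minus negative part.\<close>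
definition KL :: "real measure \<Rightarrow> real measure \<Rightarrow> ereal" where
  "KL \<nu> \<nu>' =
    (if absolutely_continuous \<nu>' \<nu> then
       (let f = (\<lambda>x. enn2real (RN_deriv \<nu>' \<nu> x)) in
          enn2ereal (\<integral>\<^sup>+ x. ennreal (ln (f x)) \<partial>\<nu>)
          - enn2ereal (\<integral>\<^sup>+ x. ennreal (- ln (f x)) \<partial>\<nu>))
     else \<infinity>)"

text \<open>K_inf(nu, x, D) = inf {KL(nu,nu') : nu' in D, E(nu') > x}; Inf {} = +infinity in ereal.\<close>
definition Kinf :: "real measure \<Rightarrow> real \<Rightarrow> real measure set \<Rightarrow> ereal" where
  "Kinf \<nu> x D = Inf {KL \<nu> \<nu>' | \<nu>'. \<nu>' \<in> D \<and> mean \<nu>' > x}"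

end

theory Submission imports Defs begin

(* Clamp a competitor nu' in D_{-infinity,M} from below at m, i.e. move all of its mass on
  (-infinity, m] onto the point m. The result lies in D_{m,M} and has a mean at least that of
  nu'. Since nu lives on [m, M], its density with respect to the clamped measure can be chosen
  equal to d nu / d nu' on (m, infinity), while at m it is nu{m} / nu'(-infinity, m], which is
  at most nu{m} / nu'{m} = (d nu / d nu')(m). So the log-likelihood ratio only decreases and
  KL(nu, .) does not increase: every competitor in D_{-infinity,M} is dominated by one in
  D_{m,M}, and the reverse inequality is the inclusion D_{m,M} <= D_{-infinity,M}. *)

lemma KL_mono_RN_deriv:
  assumes "absolutely_continuous \<nu>\<^sub>1 \<nu>" "absolutely_continuous \<nu>\<^sub>2 \<nu>"
    and "AE x in \<nu>. ln (enn2real (RN_deriv \<nu>\<^sub>1 \<nu> x)) \<le> ln (enn2real (RN_deriv \<nu>\<^sub>2 \<nu> x))"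
  shows "KL \<nu> \<nu>\<^sub>1 \<le> KL \<nu> \<nu>\<^sub>2"
proof -
  have "(\<integral>\<^sup>+ x. ennreal (ln (enn2real (RN_deriv \<nu>\<^sub>1 \<nu> x))) \<partial>\<nu>)
      \<le> (\<integral>\<^sup>+ x. ennreal (ln (enn2real (RN_deriv \<nu>\<^sub>2 \<nu> x))) \<partial>\<nu>)"
    using assms(3) by (intro nn_integral_mono_AE) (auto elim!: eventually_mono intro!: ennreal_leI)
  moreover have "(\<integral>\<^sup>+ x. ennreal (- ln (enn2real (RN_deriv \<nu>\<^sub>2 \<nu> x))) \<partial>\<nu>)
      \<le> (\<integral>\<^sup>+ x. ennreal (- ln (enn2real (RN_deriv \<nu>\<^sub>1 \<nu> x))) \<partial>\<nu>)"
    using assms(3) by (intro nn_integral_mono_AE) (auto elim!: eventually_mono intro!: ennreal_leI)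
  ultimately show ?thesis
    using assms(1,2) unfolding less_eq_ennreal.rep_eq by (simp add: KL_def ereal_minus_mono)
qed

lemma AE_density_of_AE:
  assumes "f \<in> borel_measurable M" and "AE x in M. P x"
  shows "AE x in density M f. P x"
  using assms by (simp add: AE_density eventually_mono)

lemma KL_mono_density:
  assumes "sigma_finite_measure \<nu>" "sigma_finite_measure \<nu>\<^sub>1" "sigma_finite_measure \<nu>\<^sub>2"
    and h\<^sub>1: "h\<^sub>1 \<in> borel_measurable \<nu>\<^sub>1" and dens\<^sub>1: "density \<nu>\<^sub>1 h\<^sub>1 = \<nu>"
    and h\<^sub>2: "h\<^sub>2 \<in> borel_measurable \<nu>\<^sub>2" and dens\<^sub>2: "density \<nu>\<^sub>2 h\<^sub>2 = \<nu>"
    and le: "AE x in \<nu>. h\<^sub>1 x \<le> h\<^sub>2 x"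
  shows "KL \<nu> \<nu>\<^sub>1 \<le> KL \<nu> \<nu>\<^sub>2"
proof (rule KL_mono_RN_deriv)
  interpret \<nu>\<^sub>1: sigma_finite_measure \<nu>\<^sub>1 by fact
  interpret \<nu>\<^sub>2: sigma_finite_measure \<nu>\<^sub>2 by fact
  show "absolutely_continuous \<nu>\<^sub>1 \<nu>"
    using absolutely_continuousI_density[OF h\<^sub>1] dens\<^sub>1 by simp
  show ac\<^sub>2: "absolutely_continuous \<nu>\<^sub>2 \<nu>"
    using absolutely_continuousI_density[OF h\<^sub>2] dens\<^sub>2 by simp
  have RN\<^sub>1: "AE x in \<nu>. h\<^sub>1 x = RN_deriv \<nu>\<^sub>1 \<nu> x"
    using AE_density_of_AE[OF h\<^sub>1 \<nu>\<^sub>1.RN_deriv_unique[OF h\<^sub>1 dens\<^sub>1]] unfolding dens\<^sub>1 .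
  have RN\<^sub>2: "AE x in \<nu>. h\<^sub>2 x = RN_deriv \<nu>\<^sub>2 \<nu> x"
    using AE_density_of_AE[OF h\<^sub>2 \<nu>\<^sub>2.RN_deriv_unique[OF h\<^sub>2 dens\<^sub>2]] unfolding dens\<^sub>2 .
  have pos: "AE x in \<nu>. 0 < h\<^sub>1 x"
    using AE_density[OF h\<^sub>1, of "\<lambda>x. 0 < h\<^sub>1 x"] unfolding dens\<^sub>1 by simp
  have "AE x in \<nu>\<^sub>2. RN_deriv \<nu>\<^sub>2 \<nu> x \<noteq> \<infinity>"
    using \<nu>\<^sub>2.RN_deriv_finite[OF assms(1) ac\<^sub>2] dens\<^sub>2 by auto
  then have fin: "AE x in \<nu>. RN_deriv \<nu>\<^sub>2 \<nu> x \<noteq> \<infinity>"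
    using AE_density_of_AE[OF h\<^sub>2] dens\<^sub>2 by blast
  show "AE x in \<nu>. ln (enn2real (RN_deriv \<nu>\<^sub>1 \<nu> x)) \<le> ln (enn2real (RN_deriv \<nu>\<^sub>2 \<nu> x))"
    using RN\<^sub>1 RN\<^sub>2 pos fin le
  proof eventually_elim
    case (elim x)
    then have "0 < enn2real (h\<^sub>1 x)" and "enn2real (h\<^sub>1 x) \<le> enn2real (h\<^sub>2 x)"
      by (auto simp: enn2real_positive_iff top.not_eq_extremum le_less_trans intro!: enn2real_mono)
    then show ?case using elim by simp
  qed
qed

lemma AE_D_bdd:
  assumes "\<nu> \<in> D_bdd m M"
  shows "AE x in \<nu>. x \<in> {m..M}"
proof -
  interpret prob_space \<nu>
    using assms by (simp add: D_bdd_def real_distr_def)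
  show ?thesis
    using AE_in_set_eq_1[of "{m..M}"] assms by (simp add: D_bdd_def real_distr_def emeasure_eq_measure)
qed

lemma D_bdd_subset_D_upper: "D_bdd m M \<subseteq> D_upper M"
proof
  fix \<nu> assume \<nu>: "\<nu> \<in> D_bdd m M"
  then have "prob_space \<nu>" and sets: "sets \<nu> = sets borel" and "emeasure \<nu> {m..M} = 1"
    by (auto simp: D_bdd_def real_distr_def)
  interpret prob_space \<nu> by fact
  have "AE x in \<nu>. norm x \<le> \<bar>m\<bar> + \<bar>M\<bar>"
    using AE_D_bdd[OF \<nu>] by eventually_elim auto
  then have "integrable \<nu> (\<lambda>x. x)"
    by (rule integrable_const_bound) (simp add: measurable_cong_sets[OF sets refl])
  moreover have "emeasure \<nu> {..M} = 1"
  proof (rule antisym)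
    have "emeasure \<nu> {m..M} \<le> emeasure \<nu> {..M}"
      by (rule emeasure_mono) (auto simp: sets)
    then show "1 \<le> emeasure \<nu> {..M}"
      using \<open>emeasure \<nu> {m..M} = 1\<close> by simp
  qed (rule emeasure_le_1)
  ultimately show "\<nu> \<in> D_upper M"
    using \<nu> by (simp add: D_bdd_def D_upper_def)
qed

definition clamp_below :: "real \<Rightarrow> real measure \<Rightarrow> real measure" where
  "clamp_below m \<nu> = distr \<nu> borel (\<lambda>x. max x m)"

lemma clamp_below_in_D_bdd:
  assumes "m \<le> M" and "\<nu> \<in> D_upper M"
  shows "clamp_below m \<nu> \<in> D_bdd m M"
proof -
  have "prob_space \<nu>" and sets: "sets \<nu> = sets borel" and "emeasure \<nu> {..M} = 1"
    using assms(2) by (auto simp: D_upper_def real_distr_def)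
  have max_m: "(\<lambda>x. max x m) \<in> measurable \<nu> borel"
    by (simp add: measurable_cong_sets[OF sets refl])
  have "emeasure (clamp_below m \<nu>) {m..M} = emeasure \<nu> ((\<lambda>x. max x m) -` {m..M} \<inter> space \<nu>)"
    unfolding clamp_below_def by (rule emeasure_distr[OF max_m]) simp
  also have "(\<lambda>x. max x m) -` {m..M} \<inter> space \<nu> = {..M}"
    using assms(1) sets_eq_imp_space_eq[OF sets] by auto
  finally show ?thesis
    using prob_space.prob_space_distr[OF \<open>prob_space \<nu>\<close> max_m] \<open>emeasure \<nu> {..M} = 1\<close>
    by (simp add: D_bdd_def real_distr_def clamp_below_def)
qed

lemma mean_le_mean_clamp_below:
  assumes "real_distr \<nu>" and "integrable \<nu> (\<lambda>x. x)"
  shows "mean \<nu> \<le> mean (clamp_below m \<nu>)"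
proof -
  interpret prob_space \<nu>
    using assms(1) by (simp add: real_distr_def)
  have "(\<lambda>x. max x m) \<in> measurable \<nu> borel"
    using assms(1) by (simp add: real_distr_def measurable_cong_sets[of \<nu> borel])
  then have "mean (clamp_below m \<nu>) = (\<integral>x. max x m \<partial>\<nu>)"
    unfolding mean_def clamp_below_def by (simp add: integral_distr)
  moreover have "mean \<nu> \<le> (\<integral>x. max x m \<partial>\<nu>)"
    unfolding mean_def using assms(2) by (intro integral_mono integrable_max) auto
  ultimately show ?thesis
    by simp
qed

lemma emeasure_density_singleton_le:
  assumes "f \<in> borel_measurable M" and "{x} \<in> sets M" and "x \<in> A" and "A \<in> sets M"
  shows "emeasure (density M f) {x} \<le> f x * emeasure M A"
proof -
  have "emeasure (density M f) {x} = (\<integral>\<^sup>+y. f y * indicator {x} y \<partial>M)"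
    using assms(1,2) by (rule emeasure_density)
  also have "\<dots> = (\<integral>\<^sup>+y. f x * indicator {x} y \<partial>M)"
    by (intro nn_integral_cong) (simp add: indicator_def)
  also have "\<dots> = f x * emeasure M {x}"
    using assms(2) by (rule nn_integral_cmult_indicator)
  also have "\<dots> \<le> f x * emeasure M A"
    using assms by (intro mult_left_mono emeasure_mono) auto
  finally show ?thesis .
qed

lemma density_clamp_below:
  fixes \<nu> \<nu>' :: "real measure"
  assumes sets: "sets \<nu>' = sets borel" and g: "g \<in> borel_measurable borel"
    and dens: "density \<nu>' g = \<nu>" and supp: "AE x in \<nu>. m \<le> x"
    and atom: "c * emeasure \<nu>' {..m} = emeasure \<nu> {m}"
  shows "density (clamp_below m \<nu>') (\<lambda>x. if m < x then g x else if x = m then c else 0) = \<nu>"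
    (is "density _ ?h = _")
proof (rule measure_eqI)
  have sets_\<nu>: "sets \<nu> = sets borel"
    unfolding dens[symmetric] using sets by simp
  have meas_\<nu>': "measurable \<nu>' N = measurable borel N" for N :: "'b measure"
    using measurable_cong_sets[OF sets refl] .
  have h: "?h \<in> borel_measurable borel"
    using g by measurable
  show "sets (density (clamp_below m \<nu>') ?h) = sets \<nu>"
    by (simp add: clamp_below_def sets_\<nu>)
  fix A assume "A \<in> sets (density (clamp_below m \<nu>') ?h)"
  then have A[measurable]: "A \<in> sets borel"
    by (simp add: clamp_below_def)
  have "emeasure (density (clamp_below m \<nu>') ?h) A = (\<integral>\<^sup>+x. ?h x * indicator A x \<partial>clamp_below m \<nu>')"
    by (rule emeasure_density) (use h A in \<open>simp_all add: clamp_below_def\<close>)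
  also have "\<dots> = (\<integral>\<^sup>+x. ?h (max x m) * indicator A (max x m) \<partial>\<nu>')"
    unfolding clamp_below_def by (rule nn_integral_distr) (use h in \<open>simp_all add: meas_\<nu>'\<close>)
  also have "\<dots> = (\<integral>\<^sup>+x. g x * indicator (A \<inter> {m<..}) x + c * indicator A m * indicator {..m} x \<partial>\<nu>')"
    by (intro nn_integral_cong) (auto simp: indicator_def max_def)
  also have "\<dots> = (\<integral>\<^sup>+x. g x * indicator (A \<inter> {m<..}) x \<partial>\<nu>') + c * indicator A m * emeasure \<nu>' {..m}"
    using g by (simp add: nn_integral_add nn_integral_cmult_indicator sets meas_\<nu>')
  also have "(\<integral>\<^sup>+x. g x * indicator (A \<inter> {m<..}) x \<partial>\<nu>') = emeasure \<nu> (A \<inter> {m<..})"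
    using emeasure_density[of g \<nu>' "A \<inter> {m<..}"] dens g by (simp add: sets meas_\<nu>')
  also have "c * indicator A m * emeasure \<nu>' {..m} = emeasure \<nu> (A \<inter> {m})"
    using atom by (cases "m \<in> A") (simp_all add: ac_simps)
  also have "emeasure \<nu> (A \<inter> {m<..}) + emeasure \<nu> (A \<inter> {m}) = emeasure \<nu> (A \<inter> {m..})"
    by (subst plus_emeasure) (auto simp: sets_\<nu> intro: arg_cong[where f = "emeasure \<nu>"])
  also have "\<dots> = emeasure \<nu> A"
    using supp by (intro emeasure_eq_AE) (auto simp: sets_\<nu>)
  finally show "emeasure (density (clamp_below m \<nu>') ?h) A = emeasure \<nu> A" .
qed

lemma ennreal_le_mult_factorE:
  fixes a b d :: ennreal
  assumes "a \<le> b * d" and "d \<noteq> \<top>"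
  obtains c where "c \<le> b" and "c * d = a"
proof (cases "d = 0")
  case True
  then show ?thesis
    using assms that[of 0] by simp
next
  case False
  show ?thesis
  proof (rule that)
    have "a / d \<le> b * d / d"
      using assms(1) by (rule divide_right_mono_ennreal)
    also have "\<dots> = b"
      using False assms(2) by (rule ennreal_mult_divide_eq)
    finally show "a / d \<le> b" .
    show "a / d * d = a"
      using False assms(2) by (simp add: ennreal_divide_times top.not_eq_extremum)
  qed
qed

lemma KL_clamp_below_le:
  assumes \<nu>: "\<nu> \<in> D_bdd m M" and \<nu>': "real_distr \<nu>'" and ac: "absolutely_continuous \<nu>' \<nu>"
  shows "KL \<nu> (clamp_below m \<nu>') \<le> KL \<nu> \<nu>'"
proof -
  have "prob_space \<nu>" and sets: "sets \<nu> = sets borel"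
    using \<nu> by (auto simp: D_bdd_def real_distr_def)
  have "prob_space \<nu>'" and sets': "sets \<nu>' = sets borel"
    using \<nu>' by (auto simp: real_distr_def)
  interpret \<nu>': prob_space \<nu>' by fact
  define g where "g = RN_deriv \<nu>' \<nu>"
  have g\<^sub>\<nu>': "g \<in> borel_measurable \<nu>'"
    by (simp add: g_def)
  then have g: "g \<in> borel_measurable borel"
    by (simp add: measurable_cong_sets[OF sets' refl])
  have dens: "density \<nu>' g = \<nu>"
    unfolding g_def using ac by (rule \<nu>'.density_RN_deriv) (simp add: sets sets')
  have "emeasure \<nu> {m} \<le> g m * emeasure \<nu>' {..m}"
    using emeasure_density_singleton_le[OF g\<^sub>\<nu>', of m "{..m}"] unfolding dens by (simp add: sets')
  then obtain c where c_le: "c \<le> g m" and atom: "c * emeasure \<nu>' {..m} = emeasure \<nu> {m}"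
    using ennreal_le_mult_factorE \<nu>'.emeasure_finite by metis
  (* The clamped measure has no mass below m, so the value 0 there is arbitrary; it makes h <= g. *)
  define h where "h x = (if m < x then g x else if x = m then c else 0)" for x
  have h: "h \<in> borel_measurable (clamp_below m \<nu>')"
    unfolding h_def clamp_below_def using g by measurable
  have "density (clamp_below m \<nu>') h = \<nu>"
    unfolding h_def using AE_D_bdd[OF \<nu>] atom
    by (intro density_clamp_below[OF sets' g dens]) auto
  moreover have "prob_space (clamp_below m \<nu>')"
    unfolding clamp_below_def by (rule \<nu>'.prob_space_distr) (simp add: measurable_cong_sets[OF sets' refl])
  ultimately show ?thesis
    using c_le \<open>prob_space \<nu>\<close> \<open>prob_space \<nu>'\<close>
    by (intro KL_mono_density[OF _ _ _ h _ g\<^sub>\<nu>' dens]) (auto simp: h_def prob_space_imp_sigma_finite)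
qed

lemma Kinf_antimono: "D \<subseteq> D' \<Longrightarrow> Kinf \<nu> \<mu> D' \<le> Kinf \<nu> \<mu> D"
  unfolding Kinf_def by (intro Inf_superset_mono) blast

lemma Kinf_le_Kinf_if_dominated:
  assumes "\<And>\<nu>'. \<nu>' \<in> D' \<Longrightarrow> \<mu> < mean \<nu>' \<Longrightarrow> absolutely_continuous \<nu>' \<nu> \<Longrightarrow>
      \<exists>\<nu>''\<in>D. \<mu> < mean \<nu>'' \<and> KL \<nu> \<nu>'' \<le> KL \<nu> \<nu>'"
  shows "Kinf \<nu> \<mu> D \<le> Kinf \<nu> \<mu> D'"
  unfolding Kinf_def
proof (rule Inf_greatest, safe)
  fix \<nu>' assume "\<nu>' \<in> D'" and "\<mu> < mean \<nu>'"
  show "Inf {KL \<nu> \<nu>'' |\<nu>''. \<nu>'' \<in> D \<and> \<mu> < mean \<nu>''} \<le> KL \<nu> \<nu>'"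
  proof (cases "absolutely_continuous \<nu>' \<nu>")
    case True
    then show ?thesis
      using assms[OF \<open>\<nu>' \<in> D'\<close> \<open>\<mu> < mean \<nu>'\<close>] by (blast intro: Inf_lower2)
  next
    case False
    then show ?thesis by (simp add: KL_def)
  qed
qed

theorem proposition1:
  fixes M m \<mu> :: real and \<nu> :: "real measure"
  assumes "m \<le> M"
    and "\<nu> \<in> D_bdd m M"
    and "\<mu> > mean \<nu>"
  shows "Kinf \<nu> \<mu> (D_bdd m M) = Kinf \<nu> \<mu> (D_upper M)"
proof (rule antisym)
  show "Kinf \<nu> \<mu> (D_bdd m M) \<le> Kinf \<nu> \<mu> (D_upper M)"
  proof (rule Kinf_le_Kinf_if_dominated)
    fix \<nu>' assume \<nu>': "\<nu>' \<in> D_upper M" and "\<mu> < mean \<nu>'" and ac: "absolutely_continuous \<nu>' \<nu>"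
    have "clamp_below m \<nu>' \<in> D_bdd m M"
      using assms(1) \<nu>' by (rule clamp_below_in_D_bdd)
    moreover have "\<mu> < mean (clamp_below m \<nu>')"
      using \<nu>' mean_le_mean_clamp_below[of \<nu>' m] \<open>\<mu> < mean \<nu>'\<close> by (simp add: D_upper_def)
    moreover have "KL \<nu> (clamp_below m \<nu>') \<le> KL \<nu> \<nu>'"
      using assms(2) \<nu>' ac by (intro KL_clamp_below_le) (auto simp: D_upper_def)
    ultimately show "\<exists>\<nu>''\<in>D_bdd m M. \<mu> < mean \<nu>'' \<and> KL \<nu> \<nu>'' \<le> KL \<nu> \<nu>'"
      by blast
  qed
qed (rule Kinf_antimono[OF D_bdd_subset_D_upper])

end
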